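(* Let $N_{v_1},\dots,N_{v_k}$ be positive integers and $N_u$ a nonnegative integer, and let $N_u^1,\dots,N_u^k$ be computed by the following procedure: set $\Delta\gets0$; for $i=1,\dots,k$, let $x=\frac{N_{v_i}}{\sum_{j=1}^kN_{v_j}}\cdot N_u$; if $\Delta\ge x-\lfloor x\rfloor$, set $N_u^i\gets\lfloor x\rfloor$ and $\Delta\gets\Delta-(x-\lfloor x\rfloor)$; otherwise set $N_u^i\gets\lfloor x\rfloor+1$ and $\Delta\gets\Delta+1-(x-\lfloor x\rfloor)$. Then: (1) for every $i\in\{1,\dots,k\}$, $\sum_{j=1}^iN_u^j-1\le\frac{\sum_{j=1}^iN_{v_j}}{\sum_{j=1}^kN_{v_j}}\cdot N_u\le\sum_{j=1}^iN_u^j$; (2) for all $i_1,i_2\in\{1,\dots,k\}$ with $i_1<i_2$, $\sum_{j=i_1}^{i_2}N_u^j\le\frac{\sum_{j=i_1}^{i_2}N_{v_j}}{\sum_{j=1}^kN_{v_j}}\cdot N_u+1$; (3) $\sum_{j=1}^kN_u^j\ge N_u$. *)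

theory Defs
  imports Complex_Main
begin

definition alloc_x :: "(nat \<Rightarrow> nat) \<Rightarrow> nat \<Rightarrow> nat \<Rightarrow> nat \<Rightarrow> real" where
  "alloc_x Nv k Nu i = real (Nv i) / real (\<Sum>j=1..k. Nv j) * real Nu"

text \<open>Value of Delta after processing items 1..i (Delta = 0 initially).\<close>
fun alloc_delta :: "(nat \<Rightarrow> nat) \<Rightarrow> nat \<Rightarrow> nat \<Rightarrow> nat \<Rightarrow> real" where
  "alloc_delta Nv k Nu 0 = 0"
| "alloc_delta Nv k Nu (Suc i) =
     (let x = alloc_x Nv k Nu (Suc i); d = alloc_delta Nv k Nu i in
      if d \<ge> x - of_int \<lfloor>x\<rfloor> then d - (x - of_int \<lfloor>x\<rfloor>)
      else d + 1 - (x - of_int \<lfloor>x\<rfloor>))"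

definition alloc_N :: "(nat \<Rightarrow> nat) \<Rightarrow> nat \<Rightarrow> nat \<Rightarrow> nat \<Rightarrow> int" where
  "alloc_N Nv k Nu i =
     (let x = alloc_x Nv k Nu i; d = alloc_delta Nv k Nu (i - 1) in
      if d \<ge> x - of_int \<lfloor>x\<rfloor> then \<lfloor>x\<rfloor> else \<lfloor>x\<rfloor> + 1)"

end

theory Submission
  imports Defs
begin

text \<open>Delta is the accumulated rounding surplus: after step i it equals the sum of the allocated
  N_u^j minus the sum of the exact shares x_j. Rounding x_i down when the surplus covers its
  fractional part, and up otherwise, keeps this surplus in [0, 1). Hence every prefix sum of the
  N_u^j exceeds the exact prefix share by less than 1, which gives (1); (2) is the difference of two
  prefix bounds, and (3) is the bound for the full prefix, whose exact share is N_u.\<close>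

lemma alloc_delta_Suc:
  "alloc_delta Nv k Nu (Suc i)
     = alloc_delta Nv k Nu i + real_of_int (alloc_N Nv k Nu (Suc i)) - alloc_x Nv k Nu (Suc i)"
  by (simp add: alloc_N_def Let_def)

lemma alloc_delta_bounds: "0 \<le> alloc_delta Nv k Nu i \<and> alloc_delta Nv k Nu i < 1"
proof (induction i)
  case 0
  then show ?case by simp
next
  case (Suc i)
  define x where "x = alloc_x Nv k Nu (Suc i)"
  have "0 \<le> x - of_int \<lfloor>x\<rfloor>" "x - of_int \<lfloor>x\<rfloor> < 1"
    by linarith+
  with Suc.IH show ?case
    unfolding alloc_delta.simps(2) Let_def x_def[symmetric]
    by (split if_split) (intro conjI impI; linarith)
qed

lemma alloc_delta_eq_sum:
  "alloc_delta Nv k Nu i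
     = real_of_int (\<Sum>j=1..i. alloc_N Nv k Nu j) - (\<Sum>j=1..i. alloc_x Nv k Nu j)"
  by (induction i) (simp_all add: alloc_delta_Suc del: alloc_delta.simps(2))

lemma sum_alloc_x:
  "(\<Sum>j=1..i. alloc_x Nv k Nu j) = real (\<Sum>j=1..i. Nv j) / real (\<Sum>j=1..k. Nv j) * real Nu"
  by (simp add: alloc_x_def sum_distrib_right sum_divide_distrib)

lemma alloc_prefix_share_le:
  "real (\<Sum>j=1..i. Nv j) / real (\<Sum>j=1..k. Nv j) * real Nu
     \<le> real_of_int (\<Sum>j=1..i. alloc_N Nv k Nu j)"
  using alloc_delta_bounds[of Nv k Nu i] unfolding alloc_delta_eq_sum sum_alloc_x by linarith

lemma alloc_prefix_less_share_plus_one: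
  "real_of_int (\<Sum>j=1..i. alloc_N Nv k Nu j)
     < real (\<Sum>j=1..i. Nv j) / real (\<Sum>j=1..k. Nv j) * real Nu + 1"
  using alloc_delta_bounds[of Nv k Nu i] unfolding alloc_delta_eq_sum sum_alloc_x by linarith

lemma sum_prefix_split:
  fixes f :: "nat \<Rightarrow> 'a::comm_monoid_add"
  assumes "1 \<le> m" "m \<le> n"
  shows "sum f {1..n} = sum f {1..m - 1} + sum f {m..n}"
proof -
  have "{1..n} = {1..m - 1} \<union> {m..n}" "{1..m - 1} \<inter> {m..n} = {}"
    using assms by auto
  then show ?thesis
    by (simp add: sum.union_disjoint)
qed

lemma alloc_block_le_share_plus_one:
  assumes "1 \<le> i1" "i1 \<le> i2"
  shows "real_of_int (\<Sum>j=i1..i2. alloc_N Nv k Nu j)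
           \<le> real (\<Sum>j=i1..i2. Nv j) / real (\<Sum>j=1..k. Nv j) * real Nu + 1"
proof -
  note split = sum_prefix_split[OF assms]
  have "real_of_int (\<Sum>j=i1..i2. alloc_N Nv k Nu j)
      = real_of_int (\<Sum>j=1..i2. alloc_N Nv k Nu j) - real_of_int (\<Sum>j=1..i1 - 1. alloc_N Nv k Nu j)"
    by (simp only: split[of "alloc_N Nv k Nu"])
  moreover have "real (\<Sum>j=i1..i2. Nv j) / real (\<Sum>j=1..k. Nv j) * real Nu
      = real (\<Sum>j=1..i2. Nv j) / real (\<Sum>j=1..k. Nv j) * real Nu
        - real (\<Sum>j=1..i1 - 1. Nv j) / real (\<Sum>j=1..k. Nv j) * real Nu"
    by (simp only: split[of Nv] of_nat_add add_divide_distrib distrib_right)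
  ultimately show ?thesis
    using alloc_prefix_less_share_plus_one[of Nv k Nu i2] alloc_prefix_share_le[of Nv "i1 - 1" k Nu]
    by linarith
qed

lemma alloc_total_ge:
  assumes "0 < (\<Sum>j=1..k. Nv j)"
  shows "int Nu \<le> (\<Sum>j=1..k. alloc_N Nv k Nu j)"
proof -
  from assms have "real (\<Sum>j=1..k. Nv j) \<noteq> 0"
    by (metis of_nat_0_less_iff less_irrefl)
  then have "real Nu \<le> real_of_int (\<Sum>j=1..k. alloc_N Nv k Nu j)"
    using alloc_prefix_share_le[of Nv k k Nu] by simp
  then show ?thesis
    by linarith
qed

theorem lemma9:
  fixes Nv :: "nat \<Rightarrow> nat" and k Nu :: nat
  assumes "k \<ge> 1"
    and "\<And>i. i \<in> {1..k} \<Longrightarrow> Nv i > 0"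
  shows "(\<forall>i\<in>{1..k}.
            real_of_int (\<Sum>j=1..i. alloc_N Nv k Nu j) - 1
              \<le> real (\<Sum>j=1..i. Nv j) / real (\<Sum>j=1..k. Nv j) * real Nu
          \<and> real (\<Sum>j=1..i. Nv j) / real (\<Sum>j=1..k. Nv j) * real Nu
              \<le> real_of_int (\<Sum>j=1..i. alloc_N Nv k Nu j))
       \<and> (\<forall>i1\<in>{1..k}. \<forall>i2\<in>{1..k}. i1 < i2 \<longrightarrow>
            real_of_int (\<Sum>j=i1..i2. alloc_N Nv k Nu j)
              \<le> real (\<Sum>j=i1..i2. Nv j) / real (\<Sum>j=1..k. Nv j) * real Nu + 1)
       \<and> (\<Sum>j=1..k. alloc_N Nv k Nu j) \<ge> int Nu"
proof (intro conjI ballI impI)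
  fix i
  show "real_of_int (\<Sum>j=1..i. alloc_N Nv k Nu j) - 1
          \<le> real (\<Sum>j=1..i. Nv j) / real (\<Sum>j=1..k. Nv j) * real Nu"
    using alloc_prefix_less_share_plus_one[of Nv k Nu i] by linarith
  show "real (\<Sum>j=1..i. Nv j) / real (\<Sum>j=1..k. Nv j) * real Nu
          \<le> real_of_int (\<Sum>j=1..i. alloc_N Nv k Nu j)"
    by (rule alloc_prefix_share_le)
next
  fix i1 i2
  assume "i1 \<in> {1..k}" "i1 < i2"
  then show "real_of_int (\<Sum>j=i1..i2. alloc_N Nv k Nu j)
          \<le> real (\<Sum>j=i1..i2. Nv j) / real (\<Sum>j=1..k. Nv j) * real Nu + 1"
    by (intro alloc_block_le_share_plus_one) auto
next
  show "(\<Sum>j=1..k. alloc_N Nv k Nu j) \<ge> int Nu"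
    using assms by (intro alloc_total_ge sum_pos) auto
qed

end
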